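(* Let $G$ be a digraph with a fixed upward planar drawing and let $\mathcal{P}$ be a set of pairwise vertex disjoint directed paths in $G$. Then (1) the relation $\prec_{\mathcal{P}}$ is irreflexive, and (2) $\prec_{\mathcal{P}}$ is anti-symmetric, i.e. if $P_1\prec_{\mathcal{P}}P_2$ then $P_2\not\prec_{\mathcal{P}}P_1$ for any $P_1,P_2\in\mathcal{P}$.
   Context: An upward planar drawing of a digraph is a plane drawing (no edge crossings) in which every directed edge is a curve monotone increasing in the $y$-direction from tail to head. A path is identified with the set of points of $\mathbb{R}^2$ in its drawing. For a path $P$ with endpoints $(x,y)$, $(x',y')$, $y\le y'$, let $\mathrm{Right}(P):=\{(u,v)\in\mathbb{R}^2: y\le v\le y',\ u'<u \text{ for all } u' \text{ with } (u',v)\in P\}$ and $\mathrm{Left}(P):=\{(u,v)\in\mathbb{R}^2: y\le v\le y',\ u'>u \text{ for all } u' \text{ with } (u',v)\in P\}$. A point $p\notin P$ is to the right of $P$ if $p\in\mathrm{Right}(P)$ and to the left of $P$ if $p\in\mathrm{Left}(P)$. For vertex disjoint paths $P,Q$, write $Q\prec P$ ($P$ is to the right of $Q$) if some point of $P$ is to the right of $Q$. $\prec_{\mathcal{P}}$ denotes the restriction of $\prec$ to the paths in $\mathcal{P}$. *)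

theory Defs
  imports "HOL-Analysis.Analysis"
begin

type_synonym point = "real \<times> real"

definition upward_planar_drawing ::
  "'v set \<Rightarrow> ('v \<times> 'v) set \<Rightarrow> ('v \<Rightarrow> point) \<Rightarrow> ('v \<times> 'v \<Rightarrow> real \<Rightarrow> point) \<Rightarrow> bool" where
  "upward_planar_drawing V E pos gam \<longleftrightarrow>
     E \<subseteq> V \<times> V \<and>
     inj_on pos V \<and>
     (\<forall>e\<in>E. continuous_on {0..1} (gam e) \<and>
             gam e 0 = pos (fst e) \<and> gam e 1 = pos (snd e) \<and>
             (\<forall>s\<in>{0..1}. \<forall>t\<in>{0..1}. s < t \<longrightarrow> snd (gam e s) < snd (gam e t)) \<and>
             (\<forall>w\<in>V. \<forall>t\<in>{0<..<1}. gam e t \<noteq> pos w)) \<and>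
     (\<forall>e\<in>E. \<forall>e'\<in>E. e \<noteq> e' \<longrightarrow> gam e ` {0..1} \<inter> gam e' ` {0..1} \<subseteq> pos ` V)"

definition dpath :: "'v set \<Rightarrow> ('v \<times> 'v) set \<Rightarrow> 'v list \<Rightarrow> bool" where
  "dpath V E vs \<longleftrightarrow> vs \<noteq> [] \<and> distinct vs \<and> set vs \<subseteq> V \<and>
     (\<forall>i. Suc i < length vs \<longrightarrow> (vs ! i, vs ! Suc i) \<in> E)"

definition path_points :: "('v \<Rightarrow> point) \<Rightarrow> ('v \<times> 'v \<Rightarrow> real \<Rightarrow> point) \<Rightarrow> 'v list \<Rightarrow> point set" where
  "path_points pos gam vs = pos ` set vs \<union>
     (\<Union>i\<in>{i. Suc i < length vs}. gam (vs ! i, vs ! Suc i) ` {0..1})"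

text \<open>Right(P): endpoints of P are the positions of its first and last vertex
  (the first one is the lower one in an upward drawing).\<close>
definition Right_of :: "('v \<Rightarrow> point) \<Rightarrow> ('v \<times> 'v \<Rightarrow> real \<Rightarrow> point) \<Rightarrow> 'v list \<Rightarrow> point set" where
  "Right_of pos gam vs = {(u, v). snd (pos (hd vs)) \<le> v \<and> v \<le> snd (pos (last vs)) \<and>
      (\<forall>u'. (u', v) \<in> path_points pos gam vs \<longrightarrow> u' < u)}"

definition Left_of :: "('v \<Rightarrow> point) \<Rightarrow> ('v \<times> 'v \<Rightarrow> real \<Rightarrow> point) \<Rightarrow> 'v list \<Rightarrow> point set" where
  "Left_of pos gam vs = {(u, v). snd (pos (hd vs)) \<le> v \<and> v \<le> snd (pos (last vs)) \<and>
      (\<forall>u'. (u', v) \<in> path_points pos gam vs \<longrightarrow> u' > u)}"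

text \<open>right_prec pos gam Q P: Q \<prec> P, i.e. P and Q are vertex disjoint and some point of P
  (not on Q) lies to the right of Q.\<close>
definition right_prec :: "('v \<Rightarrow> point) \<Rightarrow> ('v \<times> 'v \<Rightarrow> real \<Rightarrow> point) \<Rightarrow> 'v list \<Rightarrow> 'v list \<Rightarrow> bool" where
  "right_prec pos gam Q P \<longleftrightarrow> set P \<inter> set Q = {} \<and>
     (\<exists>p\<in>path_points pos gam P. p \<notin> path_points pos gam Q \<and> p \<in> Right_of pos gam Q)"

end

theory Submission
  imports Defs
begin

text \<open>In an upward drawing every edge, and hence every directed path, is the graph
  \<open>x = X y\<close> of a continuous function of the height \<open>y\<close>. If each of two vertex-disjoint
  paths had a point to the right of the other, the horizontal difference of their two graph
  functions would change sign on the common height range, so by the intermediate value theorem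
  the drawings would meet; planarity forbids this. Irreflexivity is immediate, since
  \<open>right_prec\<close> demands vertex-disjointness and paths are nonempty.\<close>

definition height_graph :: "point set \<Rightarrow> real \<Rightarrow> real \<Rightarrow> (real \<Rightarrow> real) \<Rightarrow> bool" where
  "height_graph S lo hi X \<longleftrightarrow> lo \<le> hi \<and> continuous_on {lo..hi} X \<and> S = (\<lambda>y. (X y, y)) ` {lo..hi}"

lemma height_graph_memD:
  "height_graph S lo hi X \<Longrightarrow> (x, y) \<in> S \<Longrightarrow> x = X y \<and> y \<in> {lo..hi}"
  unfolding height_graph_def by auto

lemma height_graph_memI:
  "height_graph S lo hi X \<Longrightarrow> y \<in> {lo..hi} \<Longrightarrow> (X y, y) \<in> S"
  unfolding height_graph_def by auto

lemma height_graph_less_if_right: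
  assumes "height_graph S lo hi X" "y \<in> {lo..hi}" "\<forall>x'. (x', y) \<in> S \<longrightarrow> x' < x"
  shows "X y < x"
  using assms height_graph_memI by blast

lemma continuous_on_crossing:
  fixes f g :: "real \<Rightarrow> real"
  assumes f: "continuous_on {lo..hi} f" and g: "continuous_on {lo..hi} g"
    and ab: "a \<in> {lo..hi}" "b \<in> {lo..hi}" and "f a < g a" "g b < f b"
  shows "\<exists>c\<in>{lo..hi}. f c = g c"
proof -
  have seg: "closed_segment a b \<subseteq> {lo..hi}"
    using ab by (intro closed_segment_subset) auto
  have "continuous_on (closed_segment a b) (\<lambda>y. g y - f y)"
    using continuous_on_subset[OF continuous_on_diff[OF g f] seg] .
  moreover have "0 \<in> closed_segment (g a - f a) (g b - f b)"
    using \<open>f a < g a\<close> \<open>g b < f b\<close> by (auto simp: closed_segment_eq_real_ivl)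
  ultimately obtain c where "c \<in> closed_segment a b" "g c - f c = 0"
    using IVT'_closed_segment_real[of 0 "\<lambda>y. g y - f y" a b] by auto
  then show ?thesis using seg by force
qed

lemma height_graphs_crossing_meet:
  assumes S: "height_graph S lo hi X" and T: "height_graph T lo' hi' Y"
    and ab: "a \<in> {lo..hi} \<inter> {lo'..hi'}" "b \<in> {lo..hi} \<inter> {lo'..hi'}"
    and "X a < Y a" "Y b < X b"
  shows "S \<inter> T \<noteq> {}"
proof -
  have common: "{lo..hi} \<inter> {lo'..hi'} = {max lo lo'..min hi hi'}" by auto
  have "continuous_on {max lo lo'..min hi hi'} X" "continuous_on {max lo lo'..min hi hi'} Y"
    using S T unfolding height_graph_def by (auto intro: continuous_on_subset)
  then obtain c where c: "c \<in> {lo..hi} \<inter> {lo'..hi'}" "X c = Y c"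
    using continuous_on_crossing[of _ _ X Y a b] assms(3-) unfolding common by blast
  then have "(X c, c) \<in> S \<inter> T"
    using height_graph_memI[OF S, of c] height_graph_memI[OF T, of c] by auto
  then show ?thesis by blast
qed

lemma continuous_strict_mono_on_image_Icc:
  fixes \<phi> :: "real \<Rightarrow> real"
  assumes "continuous_on {a..b} \<phi>" "strict_mono_on {a..b} \<phi>" "a \<le> b"
  shows "\<phi> ` {a..b} = {\<phi> a..\<phi> b}"
proof
  have "\<phi> a \<le> \<phi> t \<and> \<phi> t \<le> \<phi> b" if "t \<in> {a..b}" for t
    using assms(2,3) that by (cases "t = a"; cases "t = b") (auto simp: strict_mono_on_def less_imp_le)
  then show "\<phi> ` {a..b} \<subseteq> {\<phi> a..\<phi> b}" by auto
  show "{\<phi> a..\<phi> b} \<subseteq> \<phi> ` {a..b}"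
    using IVT'[of \<phi> a _ b] assms(1,3) by fastforce
qed

text \<open>Reparametrise the curve by the inverse of its height function, which is continuous
  because the parameter interval is compact.\<close>
lemma upward_curve_height_graph:
  fixes g :: "real \<Rightarrow> point"
  assumes g: "continuous_on {a..b} g" and up: "strict_mono_on {a..b} (snd \<circ> g)" and "a \<le> b"
  shows "\<exists>X. height_graph (g ` {a..b}) (snd (g a)) (snd (g b)) X"
proof -
  define \<phi> where "\<phi> = snd \<circ> g"
  define \<psi> where "\<psi> = inv_into {a..b} \<phi>"
  have c\<phi>: "continuous_on {a..b} \<phi>" unfolding \<phi>_def by (intro continuous_intros g)
  have img: "\<phi> ` {a..b} = {\<phi> a..\<phi> b}"
    using continuous_strict_mono_on_image_Icc[OF c\<phi>] up \<open>a \<le> b\<close> by (simp add: \<phi>_def)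
  have "inj_on \<phi> {a..b}"
    using strict_mono_on_imp_inj_on[OF up] by (simp add: \<phi>_def)
  then have \<psi>\<phi>: "\<forall>t\<in>{a..b}. \<psi> (\<phi> t) = t"
    unfolding \<psi>_def by simp
  have c\<psi>: "continuous_on {\<phi> a..\<phi> b} \<psi>"
    using continuous_on_inv[OF c\<phi> compact_Icc \<psi>\<phi>] img by simp
  have \<psi>_in: "\<psi> ` {\<phi> a..\<phi> b} \<subseteq> {a..b}"
    using img unfolding \<psi>_def by (metis inv_into_into image_subsetI)
  define X where "X = fst \<circ> g \<circ> \<psi>"
  have "continuous_on {\<phi> a..\<phi> b} X"
    unfolding X_def using c\<psi> \<psi>_in
    by (intro continuous_on_compose continuous_intros continuous_on_subset[OF g]) auto
  moreover have "g ` {a..b} = (\<lambda>y. (X y, y)) ` \<phi> ` {a..b}"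
    unfolding image_image using \<psi>\<phi> by (intro image_cong) (auto simp: X_def \<phi>_def)
  moreover have "\<phi> a \<le> \<phi> b" using img \<open>a \<le> b\<close> by auto
  ultimately have "height_graph (g ` {a..b}) (\<phi> a) (\<phi> b) X"
    unfolding height_graph_def img by blast
  then show ?thesis by (auto simp: \<phi>_def)
qed

lemma height_graph_Un:
  assumes S: "height_graph S a b X" and T: "height_graph T b c Y" and "X b = Y b"
  shows "height_graph (S \<union> T) a c (\<lambda>y. if y \<le> b then X y else Y y)"
proof -
  let ?Z = "\<lambda>y. if y \<le> b then X y else Y y"
  have "a \<le> b" "b \<le> c" using S T unfolding height_graph_def by auto
  then have abc: "{a..b} \<union> {b..c} = {a..c}" by auto
  have "continuous_on ({a..b} \<union> {b..c}) ?Z"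
  proof (rule continuous_on_closed_Un)
    show "continuous_on {a..b} ?Z"
      using S unfolding height_graph_def by (auto intro: continuous_on_eq)
    have "continuous_on {b..c} Y" using T unfolding height_graph_def by blast
    then show "continuous_on {b..c} ?Z"
      by (rule continuous_on_eq) (use \<open>X b = Y b\<close> in auto)
  qed auto
  moreover have "S \<union> T = (\<lambda>y. (?Z y, y)) ` {a..c}"
  proof -
    have "S = (\<lambda>y. (?Z y, y)) ` {a..b}" "T = (\<lambda>y. (?Z y, y)) ` {b..c}"
      using S T \<open>X b = Y b\<close> unfolding height_graph_def by (auto intro!: image_cong)
    then show ?thesis by (simp only: image_Un[symmetric] abc)
  qed
  ultimately show ?thesis
    unfolding height_graph_def using \<open>a \<le> b\<close> \<open>b \<le> c\<close> abc by auto
qed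

lemma edge_height_graph:
  assumes "upward_planar_drawing V E pos gam" "e \<in> E"
  shows "\<exists>X. height_graph (gam e ` {0..1}) (snd (pos (fst e))) (snd (pos (snd e))) X"
proof -
  have "continuous_on {0..1} (gam e)" "strict_mono_on {0..1} (snd \<circ> gam e)"
    "gam e 0 = pos (fst e)" "gam e 1 = pos (snd e)"
    using assms unfolding upward_planar_drawing_def strict_mono_on_def by auto
  then show ?thesis using upward_curve_height_graph[of 0 1 "gam e"] by auto
qed

lemma dpath_Cons_ConsD:
  assumes "dpath V E (a # b # vs)"
  shows "(a, b) \<in> E" "dpath V E (b # vs)"
proof -
  have edges: "((a # b # vs) ! i, (a # b # vs) ! Suc i) \<in> E" if "Suc i < length (a # b # vs)" for i
    using assms that unfolding dpath_def by blast
  show "(a, b) \<in> E" using edges[of 0] by simp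
  show "dpath V E (b # vs)"
    using assms edges[of "Suc _"] unfolding dpath_def by auto
qed

lemma path_points_Cons_Cons:
  assumes "gam (a, b) 0 = pos a"
  shows "path_points pos gam (a # b # vs) = gam (a, b) ` {0..1} \<union> path_points pos gam (b # vs)"
proof -
  have I: "{i. Suc i < length (a # b # vs)} = insert 0 (Suc ` {j. Suc j < length (b # vs)})"
    by (auto simp: image_iff) (metis Suc_less_eq less_Suc_eq_0_disj not0_implies_Suc)
  have "pos a \<in> gam (a, b) ` {0..1}" using assms by force
  then show ?thesis unfolding path_points_def I by auto
qed

lemma dpath_height_graph:
  assumes D: "upward_planar_drawing V E pos gam"
  shows "dpath V E vs \<Longrightarrow>
    \<exists>X. height_graph (path_points pos gam vs) (snd (pos (hd vs))) (snd (pos (last vs))) X"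
proof (induction vs rule: induct_list012)
  case 1
  then show ?case by (simp add: dpath_def)
next
  case (2 a)
  have "height_graph {pos a} (snd (pos a)) (snd (pos a)) (\<lambda>_. fst (pos a))"
    unfolding height_graph_def by auto
  then show ?case by (auto simp: path_points_def)
next
  case (3 a b vs)
  have ab: "(a, b) \<in> E" and "dpath V E (b # vs)" using dpath_Cons_ConsD[OF "3.prems"] by auto
  then obtain Y where
    Y: "height_graph (path_points pos gam (b # vs)) (snd (pos b)) (snd (pos (last (b # vs)))) Y"
    using "3.IH"(2) by auto
  obtain X where X: "height_graph (gam (a, b) ` {0..1}) (snd (pos a)) (snd (pos b)) X"
    using edge_height_graph[OF D ab] by auto
  have ends: "gam (a, b) 0 = pos a" "gam (a, b) 1 = pos b"
    using D ab unfolding upward_planar_drawing_def by auto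
  then have "pos b \<in> gam (a, b) ` {0..1}" by (metis atLeastAtMost_iff image_eqI order_refl zero_le_one)
  moreover have "pos b \<in> path_points pos gam (b # vs)" by (simp add: path_points_def)
  ultimately have match: "X (snd (pos b)) = Y (snd (pos b))"
    using height_graph_memD[OF X, of "fst (pos b)"] height_graph_memD[OF Y, of "fst (pos b)"] by auto
  have "last (a # b # vs) = last (b # vs)" by simp
  with height_graph_Un[OF X Y match] show ?case
    unfolding path_points_Cons_Cons[of gam a b pos vs, OF ends(1)] list.sel(1) by metis
qed

lemma edge_point_at_vertex:
  assumes D: "upward_planar_drawing V E pos gam" and "e \<in> E"
    and x: "x \<in> gam e ` {0..1}" "x \<in> pos ` V"
  shows "x = pos (fst e) \<or> x = pos (snd e)"
proof -
  obtain t where t: "t \<in> {0..1}" "x = gam e t" using x by auto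
  have "\<forall>w\<in>V. \<forall>t\<in>{0<..<1}. gam e t \<noteq> pos w" "gam e 0 = pos (fst e)" "gam e 1 = pos (snd e)"
    using D \<open>e \<in> E\<close> unfolding upward_planar_drawing_def by auto
  moreover have "t = 0 \<or> t = 1 \<or> t \<in> {0<..<1}" using t by auto
  ultimately show ?thesis using t x(2) by auto
qed

lemma path_point_at_vertex:
  assumes D: "upward_planar_drawing V E pos gam" and P: "dpath V E P"
    and x: "x \<in> path_points pos gam P" "x \<in> pos ` V"
  shows "x \<in> pos ` set P"
proof (rule ccontr)
  assume "x \<notin> pos ` set P"
  then obtain i where i: "Suc i < length P" "x \<in> gam (P ! i, P ! Suc i) ` {0..1}"
    using x unfolding path_points_def by auto
  have "(P ! i, P ! Suc i) \<in> E" using P i unfolding dpath_def by auto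
  from edge_point_at_vertex[OF D this i(2) x(2)]
  have "x = pos (P ! i) \<or> x = pos (P ! Suc i)" by simp
  with i \<open>x \<notin> pos ` set P\<close> show False by auto
qed

lemma vertex_disjoint_paths_points_disjoint:
  assumes D: "upward_planar_drawing V E pos gam" and P: "dpath V E P" and Q: "dpath V E Q"
    and disj: "set P \<inter> set Q = {}"
  shows "path_points pos gam P \<inter> path_points pos gam Q = {}"
proof (rule ccontr)
  assume "path_points pos gam P \<inter> path_points pos gam Q \<noteq> {}"
  then obtain x where xP: "x \<in> path_points pos gam P" and xQ: "x \<in> path_points pos gam Q" by auto
  have V: "set P \<subseteq> V" "set Q \<subseteq> V" using P Q unfolding dpath_def by auto
  have "x \<in> pos ` V"
  proof (rule ccontr)
    assume x_off: "x \<notin> pos ` V"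
    then obtain i j where i: "Suc i < length P" "x \<in> gam (P ! i, P ! Suc i) ` {0..1}"
      and j: "Suc j < length Q" "x \<in> gam (Q ! j, Q ! Suc j) ` {0..1}"
      using xP xQ V unfolding path_points_def by blast
    have "(P ! i, P ! Suc i) \<in> E" "(Q ! j, Q ! Suc j) \<in> E"
      using P Q i j unfolding dpath_def by auto
    moreover have "P ! i \<noteq> Q ! j" using i(1) j(1) disj by (metis Suc_lessD disjoint_iff nth_mem)
    moreover have "\<forall>e\<in>E. \<forall>e'\<in>E. e \<noteq> e' \<longrightarrow> gam e ` {0..1} \<inter> gam e' ` {0..1} \<subseteq> pos ` V"
      using D unfolding upward_planar_drawing_def by blast
    ultimately show False using i(2) j(2) x_off by blast
  qed
  then obtain v w where "v \<in> set P" "w \<in> set Q" "pos v = pos w"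
    using path_point_at_vertex[OF D P xP] path_point_at_vertex[OF D Q xQ] by auto
  moreover have "inj_on pos V" using D unfolding upward_planar_drawing_def by blast
  ultimately have "v = w" using V by (auto dest: inj_onD)
  with \<open>v \<in> set P\<close> \<open>w \<in> set Q\<close> disj show False by blast
qed

lemma right_prec_both_ways_meet:
  assumes D: "upward_planar_drawing V E pos gam" and P: "dpath V E P" and Q: "dpath V E Q"
    and "right_prec pos gam P Q" "right_prec pos gam Q P"
  shows "path_points pos gam P \<inter> path_points pos gam Q \<noteq> {}"
proof -
  obtain X where X: "height_graph (path_points pos gam P) (snd (pos (hd P))) (snd (pos (last P))) X"
    using dpath_height_graph[OF D P] by auto
  obtain Y where Y: "height_graph (path_points pos gam Q) (snd (pos (hd Q))) (snd (pos (last Q))) Y"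
    using dpath_height_graph[OF D Q] by auto
  obtain qx a where q: "(qx, a) \<in> path_points pos gam Q" "(qx, a) \<in> Right_of pos gam P"
    using \<open>right_prec pos gam P Q\<close> unfolding right_prec_def by auto
  obtain px b where p: "(px, b) \<in> path_points pos gam P" "(px, b) \<in> Right_of pos gam Q"
    using \<open>right_prec pos gam Q P\<close> unfolding right_prec_def by auto
  have a: "qx = Y a" "a \<in> {snd (pos (hd Q))..snd (pos (last Q))}"
    using height_graph_memD[OF Y q(1)] by auto
  have b: "px = X b" "b \<in> {snd (pos (hd P))..snd (pos (last P))}"
    using height_graph_memD[OF X p(1)] by auto
  have "a \<in> {snd (pos (hd P))..snd (pos (last P))}" "X a < Y a"
    using q(2) a height_graph_less_if_right[OF X, of a qx] by (auto simp: Right_of_def)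
  moreover have "b \<in> {snd (pos (hd Q))..snd (pos (last Q))}" "Y b < X b"
    using p(2) b height_graph_less_if_right[OF Y, of b px] by (auto simp: Right_of_def)
  ultimately show ?thesis
    using height_graphs_crossing_meet[OF X Y, of a b] a(2) b(2) by blast
qed

theorem lemma7:
  fixes V :: "'v set" and E :: "('v \<times> 'v) set"
    and pos :: "'v \<Rightarrow> real \<times> real" and gam :: "'v \<times> 'v \<Rightarrow> real \<Rightarrow> real \<times> real"
    and \<P> :: "'v list set"
  assumes "finite V"
    and "upward_planar_drawing V E pos gam"
    and "\<forall>P\<in>\<P>. dpath V E P"
    and "\<forall>P\<in>\<P>. \<forall>Q\<in>\<P>. P \<noteq> Q \<longrightarrow> set P \<inter> set Q = {}"
  shows "(\<forall>P\<in>\<P>. \<not> right_prec pos gam P P) \<and>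
         (\<forall>P1\<in>\<P>. \<forall>P2\<in>\<P>. right_prec pos gam P1 P2 \<longrightarrow> \<not> right_prec pos gam P2 P1)"
proof (intro conjI ballI impI notI)
  fix P assume "P \<in> \<P>" "right_prec pos gam P P"
  then show False using assms(3) unfolding right_prec_def dpath_def by auto
next
  fix P1 P2 assume "P1 \<in> \<P>" "P2 \<in> \<P>"
    and r: "right_prec pos gam P1 P2" "right_prec pos gam P2 P1"
  then have P: "dpath V E P1" "dpath V E P2" using assms(3) by auto
  have "set P1 \<inter> set P2 = {}" using r(1) unfolding right_prec_def by auto
  with right_prec_both_ways_meet[OF assms(2) P r] show False
    using vertex_disjoint_paths_points_disjoint[OF assms(2) P] by simp
qed

end
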